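(* For every $\lambda\in\mathbb{C}$, $$\det\left(\mathbf{P}_4^{-1}\mathbf{K}-\lambda I_{2m+n}\right)=(1-\lambda)^{2m}\det\left(B^{-1}H-\lambda I_n\right).$$ Consequently the eigenvalues of $\mathbf{P}_4^{-1}\mathbf{K}$ are $1$ with algebraic multiplicity (at least) $2m$ together with the eigenvalues of $B^{-1}H$ (counted with algebraic multiplicity).
   Context: Let $m,n\ge 1$. Let $R_u\in\mathbb{R}^{m\times m}$ be invertible, $R_z\in\mathbb{R}^{m\times n}$, $L_{uu}\in\mathbb{R}^{m\times m}$ symmetric, $L_{uz}\in\mathbb{R}^{m\times n}$, $L_{zu}:=L_{uz}^T$, $L_{zz}\in\mathbb{R}^{n\times n}$ symmetric, and $B\in\mathbb{R}^{n\times n}$ invertible. Write $R_u^{-T}:=(R_u^{-1})^T$. Define $L_{yy}:=L_{uz}-L_{uu}R_u^{-1}R_z$ and the reduced Hessian $H:=L_{zz}-L_{zu}R_u^{-1}R_z-R_z^TR_u^{-T}L_{uz}+R_z^TR_u^{-T}L_{uu}R_u^{-1}R_z$. The KKT matrix is $\mathbf{K}:=\begin{bmatrix} L_{uu} & L_{uz} & R_u^T\\ L_{zu} & L_{zz} & R_z^T\\ R_u & R_z & 0\end{bmatrix}$. The preconditioner is $\mathbf{P}_4:=\mathbf{K}_1\mathbf{K}_2$ where $\mathbf{K}_1=\begin{bmatrix} L_{uu}R_u^{-1} & 0 & I_m\\ L_{zu}R_u^{-1} & I_n & R_z^TR_u^{-T}\\ I_m & 0 & 0\end{bmatrix}$ and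 $\mathbf{K}_2=\begin{bmatrix} R_u & R_z & 0\\ 0 & B & 0\\ 0 & L_{yy} & R_u^T\end{bmatrix}$. *)

theory Defs
  imports "Jordan_Normal_Form.Determinant" "Jordan_Normal_Form.Char_Poly"
begin

(* inverse of a square matrix (meaningful when the matrix is invertible) *)
definition inv_mat :: "'a :: field mat \<Rightarrow> 'a mat" where
  "inv_mat A = (THE B. B \<in> carrier_mat (dim_row A) (dim_row A) \<and>
       A * B = 1\<^sub>m (dim_row A) \<and> B * A = 1\<^sub>m (dim_row A))"

(* horizontal concatenation [A B] *)
definition hcat :: "'a :: zero mat \<Rightarrow> 'a mat \<Rightarrow> 'a mat" where
  "hcat A B = four_block_mat A B (0\<^sub>m 0 (dim_col A)) (0\<^sub>m 0 (dim_col B))"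

(* 3x3 block matrix [A11 A12 A13; A21 A22 A23; A31 A32 A33] *)
definition block3 :: "'a :: zero mat \<Rightarrow> 'a mat \<Rightarrow> 'a mat \<Rightarrow> 'a mat \<Rightarrow> 'a mat \<Rightarrow> 'a mat
    \<Rightarrow> 'a mat \<Rightarrow> 'a mat \<Rightarrow> 'a mat \<Rightarrow> 'a mat" where
  "block3 A11 A12 A13 A21 A22 A23 A31 A32 A33 =
     four_block_mat (four_block_mat A11 A12 A21 A22) (A13 @\<^sub>r A23) (hcat A31 A32) A33"

end

theory Submission
  imports Defs
begin

(* The KKT matrix factors as K = K1 * K2', where K2' is K2 with the block B replaced by the
   reduced Hessian H; hence P4^-1 K = K2^-1 K2'. The matrices K2 and K2' are block triangular with
   the same off-diagonal blocks, so the pencil K2' - z K2 has diagonal blocks (1 - z) Ru, H - z B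
   and (1 - z) Ru^T. Dividing its determinant by det K2 = det Ru * det B * det Ru leaves
   (1 - z)^(2m) * det (B^-1 H - z I). *)

lemma sum_lessThan_add:
  "sum (f :: nat \<Rightarrow> 'a :: comm_monoid_add) {..<a + b} = sum f {..<a} + (\<Sum>k<b. f (a + k))"
  by (induction b) (auto simp: add_ac)

lemma dim_block3:
  "dim_row (block3 A11 A12 A13 A21 A22 A23 A31 A32 A33) = dim_row A11 + dim_row A22 + dim_row A33"
  "dim_col (block3 A11 A12 A13 A21 A22 A23 A31 A32 A33) = dim_col A11 + dim_col A22 + dim_col A33"
  unfolding block3_def by simp_all

lemma block3_carrier:
  assumes "A11 \<in> carrier_mat r1 s1" "A12 \<in> carrier_mat r1 s2" "A13 \<in> carrier_mat r1 s3"
    "A21 \<in> carrier_mat r2 s1" "A22 \<in> carrier_mat r2 s2" "A23 \<in> carrier_mat r2 s3"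
    "A31 \<in> carrier_mat r3 s1" "A32 \<in> carrier_mat r3 s2" "A33 \<in> carrier_mat r3 s3"
  shows "block3 A11 A12 A13 A21 A22 A23 A31 A32 A33 \<in> carrier_mat (r1 + r2 + r3) (s1 + s2 + s3)"
  using assms by (auto simp: dim_block3)

lemma block3_index:
  assumes "A11 \<in> carrier_mat r1 s1" "A12 \<in> carrier_mat r1 s2" "A13 \<in> carrier_mat r1 s3"
    "A21 \<in> carrier_mat r2 s1" "A22 \<in> carrier_mat r2 s2" "A23 \<in> carrier_mat r2 s3"
    "A31 \<in> carrier_mat r3 s1" "A32 \<in> carrier_mat r3 s2" "A33 \<in> carrier_mat r3 s3"
    and "i < r1 + r2 + r3" "j < s1 + s2 + s3"
  shows "block3 A11 A12 A13 A21 A22 A23 A31 A32 A33 $$ (i, j) =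
    (if i < r1 then
       if j < s1 then A11 $$ (i, j) else if j < s1 + s2 then A12 $$ (i, j - s1)
       else A13 $$ (i, j - s1 - s2)
     else if i < r1 + r2 then
       if j < s1 then A21 $$ (i - r1, j) else if j < s1 + s2 then A22 $$ (i - r1, j - s1)
       else A23 $$ (i - r1, j - s1 - s2)
     else
       if j < s1 then A31 $$ (i - r1 - r2, j) else if j < s1 + s2 then A32 $$ (i - r1 - r2, j - s1)
       else A33 $$ (i - r1 - r2, j - s1 - s2))"
  using assms unfolding block3_def hcat_def append_rows_def
  by (auto simp: index_mat_four_block)

lemma block3_mult:
  fixes A11 :: "'a :: comm_ring_1 mat"
  assumes a: "A11 \<in> carrier_mat r1 s1" "A12 \<in> carrier_mat r1 s2" "A13 \<in> carrier_mat r1 s3"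
    "A21 \<in> carrier_mat r2 s1" "A22 \<in> carrier_mat r2 s2" "A23 \<in> carrier_mat r2 s3"
    "A31 \<in> carrier_mat r3 s1" "A32 \<in> carrier_mat r3 s2" "A33 \<in> carrier_mat r3 s3"
  and b: "B11 \<in> carrier_mat s1 t1" "B12 \<in> carrier_mat s1 t2" "B13 \<in> carrier_mat s1 t3"
    "B21 \<in> carrier_mat s2 t1" "B22 \<in> carrier_mat s2 t2" "B23 \<in> carrier_mat s2 t3"
    "B31 \<in> carrier_mat s3 t1" "B32 \<in> carrier_mat s3 t2" "B33 \<in> carrier_mat s3 t3"
  shows "block3 A11 A12 A13 A21 A22 A23 A31 A32 A33 * block3 B11 B12 B13 B21 B22 B23 B31 B32 B33
    = block3 (A11 * B11 + A12 * B21 + A13 * B31) (A11 * B12 + A12 * B22 + A13 * B32)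
        (A11 * B13 + A12 * B23 + A13 * B33)
      (A21 * B11 + A22 * B21 + A23 * B31) (A21 * B12 + A22 * B22 + A23 * B32)
        (A21 * B13 + A22 * B23 + A23 * B33)
      (A31 * B11 + A32 * B21 + A33 * B31) (A31 * B12 + A32 * B22 + A33 * B32)
        (A31 * B13 + A32 * B23 + A33 * B33)"
    (is "?A * ?B = ?C")
proof (rule eq_matI)
  have cA: "?A \<in> carrier_mat (r1 + r2 + r3) (s1 + s2 + s3)" by (rule block3_carrier[OF a])
  have cB: "?B \<in> carrier_mat (s1 + s2 + s3) (t1 + t2 + t3)" by (rule block3_carrier[OF b])
  have cC: "?C \<in> carrier_mat (r1 + r2 + r3) (t1 + t2 + t3)" by (rule block3_carrier, use a b in auto)
  then show "dim_row (?A * ?B) = dim_row ?C" "dim_col (?A * ?B) = dim_col ?C"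
    using cA cB by auto
  fix i j assume "i < dim_row ?C" "j < dim_col ?C"
  with cC have i: "i < r1 + r2 + r3" and j: "j < t1 + t2 + t3" by auto
  have "(?A * ?B) $$ (i, j) = (\<Sum>k<s1 + s2 + s3. ?A $$ (i, k) * ?B $$ (k, j))"
    using cA cB i j by (auto simp: scalar_prod_def lessThan_atLeast0 intro!: sum.cong)
  also have "\<dots> = (\<Sum>k<s1. ?A $$ (i, k) * ?B $$ (k, j))
      + (\<Sum>k<s2. ?A $$ (i, s1 + k) * ?B $$ (s1 + k, j))
      + (\<Sum>k<s3. ?A $$ (i, s1 + s2 + k) * ?B $$ (s1 + s2 + k, j))"
    unfolding sum_lessThan_add by (simp add: add.assoc)
  also have "\<dots> = ?C $$ (i, j)"
    using i j a b
    by (simp add: block3_index[OF a] block3_index[OF b] block3_index[of _ r1 t1 _ t2 _ t3 _ r2 _ _ _ r3]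
        scalar_prod_def lessThan_atLeast0 sum.distrib)
  finally show "(?A * ?B) $$ (i, j) = ?C $$ (i, j)" .
qed

lemma block3_one:
  "block3 (1\<^sub>m a) (0\<^sub>m a b) (0\<^sub>m a c) (0\<^sub>m b a) (1\<^sub>m b) (0\<^sub>m b c) (0\<^sub>m c a) (0\<^sub>m c b) (1\<^sub>m c)
    = (1\<^sub>m (a + b + c) :: 'a :: zero_neq_one mat)"
  by (rule eq_matI) (auto simp: dim_block3 block3_index[of _ a a _ b _ c _ b _ _ _ c])

lemma map_block3:
  assumes "A11 \<in> carrier_mat r1 s1" "A12 \<in> carrier_mat r1 s2" "A13 \<in> carrier_mat r1 s3"
    "A21 \<in> carrier_mat r2 s1" "A22 \<in> carrier_mat r2 s2" "A23 \<in> carrier_mat r2 s3"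
    "A31 \<in> carrier_mat r3 s1" "A32 \<in> carrier_mat r3 s2" "A33 \<in> carrier_mat r3 s3"
  shows "map_mat f (block3 A11 A12 A13 A21 A22 A23 A31 A32 A33) =
    block3 (map_mat f A11) (map_mat f A12) (map_mat f A13) (map_mat f A21) (map_mat f A22)
      (map_mat f A23) (map_mat f A31) (map_mat f A32) (map_mat f A33)"
  using assms
  by (intro eq_matI) (auto simp: dim_block3 block3_index[of _ r1 s1 _ s2 _ s3 _ r2 _ _ _ r3])

lemma block3_diff_smult:
  fixes A11 :: "'a :: comm_ring_1 mat"
  assumes "A11 \<in> carrier_mat r1 s1" "A12 \<in> carrier_mat r1 s2" "A13 \<in> carrier_mat r1 s3"
    "A21 \<in> carrier_mat r2 s1" "A22 \<in> carrier_mat r2 s2" "A23 \<in> carrier_mat r2 s3"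
    "A31 \<in> carrier_mat r3 s1" "A32 \<in> carrier_mat r3 s2" "A33 \<in> carrier_mat r3 s3"
  and "B11 \<in> carrier_mat r1 s1" "B12 \<in> carrier_mat r1 s2" "B13 \<in> carrier_mat r1 s3"
    "B21 \<in> carrier_mat r2 s1" "B22 \<in> carrier_mat r2 s2" "B23 \<in> carrier_mat r2 s3"
    "B31 \<in> carrier_mat r3 s1" "B32 \<in> carrier_mat r3 s2" "B33 \<in> carrier_mat r3 s3"
  shows "block3 A11 A12 A13 A21 A22 A23 A31 A32 A33 - z \<cdot>\<^sub>m block3 B11 B12 B13 B21 B22 B23 B31 B32 B33 =
    block3 (A11 - z \<cdot>\<^sub>m B11) (A12 - z \<cdot>\<^sub>m B12) (A13 - z \<cdot>\<^sub>m B13) (A21 - z \<cdot>\<^sub>m B21)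
      (A22 - z \<cdot>\<^sub>m B22) (A23 - z \<cdot>\<^sub>m B23) (A31 - z \<cdot>\<^sub>m B31) (A32 - z \<cdot>\<^sub>m B32) (A33 - z \<cdot>\<^sub>m B33)"
  using assms
  by (intro eq_matI) (auto simp: dim_block3 minus_carrier_mat block3_index[of _ r1 s1 _ s2 _ s3 _ r2 _ _ _ r3])

lemma det_block3_triangular:
  fixes A11 :: "'a :: idom mat"
  assumes "A11 \<in> carrier_mat n1 n1" "A12 \<in> carrier_mat n1 n2" "A22 \<in> carrier_mat n2 n2"
    "A32 \<in> carrier_mat n3 n2" "A33 \<in> carrier_mat n3 n3"
  shows "det (block3 A11 A12 (0\<^sub>m n1 n3) (0\<^sub>m n2 n1) A22 (0\<^sub>m n2 n3) (0\<^sub>m n3 n1) A32 A33)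
    = det A11 * det A22 * det A33"
proof -
  have "0\<^sub>m n1 n3 @\<^sub>r 0\<^sub>m n2 n3 = (0\<^sub>m (n1 + n2) n3 :: 'a mat)"
    by (rule eq_matI) (auto simp: append_rows_def)
  then have "det (block3 A11 A12 (0\<^sub>m n1 n3) (0\<^sub>m n2 n1) A22 (0\<^sub>m n2 n3) (0\<^sub>m n3 n1) A32 A33)
      = det (four_block_mat A11 A12 (0\<^sub>m n2 n1) A22) * det A33"
    unfolding block3_def
    by (intro det_four_block_mat_upper_right_zero[of _ "n1 + n2"]) (use assms in \<open>auto simp: hcat_def\<close>)
  also have "det (four_block_mat A11 A12 (0\<^sub>m n2 n1) A22) = det A11 * det A22"
    by (rule det_four_block_mat_lower_left_zero) (use assms in auto)
  finally show ?thesis .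
qed

lemma invertible_mat_det_nonzero:
  fixes A :: "'a :: field mat"
  assumes A: "A \<in> carrier_mat n n" and "invertible_mat A"
  shows "det A \<noteq> 0"
proof -
  from assms obtain B where AB: "A * B = 1\<^sub>m n" and "B * A = 1\<^sub>m (dim_row B)"
    unfolding invertible_mat_def inverts_mat_def by auto
  then have "B \<in> carrier_mat n n"
    using A by (metis carrier_matD carrier_matI index_mult_mat(2,3) index_one_mat(2,3))
  with AB show ?thesis using det_mult[OF A, of B] by auto
qed

lemma inv_mat_eqI:
  fixes A :: "'a :: field mat"
  assumes A: "A \<in> carrier_mat n n" and B: "B \<in> carrier_mat n n" and AB: "A * B = 1\<^sub>m n"
  shows "inv_mat A = B"
  unfolding inv_mat_def
proof (rule the_equality)
  have "B * A = 1\<^sub>m n" by (rule mat_mult_left_right_inverse[OF A B AB])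
  with A B AB show "B \<in> carrier_mat (dim_row A) (dim_row A) \<and> A * B = 1\<^sub>m (dim_row A) \<and> B * A = 1\<^sub>m (dim_row A)"
    by auto
next
  fix C assume "C \<in> carrier_mat (dim_row A) (dim_row A) \<and> A * C = 1\<^sub>m (dim_row A) \<and> C * A = 1\<^sub>m (dim_row A)"
  with A have C: "C \<in> carrier_mat n n" and CA: "C * A = 1\<^sub>m n" by auto
  have "C = (C * A) * B" using assoc_mult_mat[OF C A B] C by (simp add: AB)
  then show "C = B" using B by (simp add: CA)
qed

lemma
  fixes A :: "'a :: field mat"
  assumes A: "A \<in> carrier_mat n n" and "det A \<noteq> 0"
  shows inv_mat_carrier: "inv_mat A \<in> carrier_mat n n"
    and mult_inv_mat: "A * inv_mat A = 1\<^sub>m n"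
    and inv_mat_mult: "inv_mat A * A = 1\<^sub>m n"
proof -
  from det_non_zero_imp_unit[OF assms, of undefined]
  obtain B where B: "B \<in> carrier_mat n n" and AB: "A * B = 1\<^sub>m n"
    unfolding Units_def by (auto simp: ring_mat_def)
  then have "inv_mat A = B" by (rule inv_mat_eqI[OF A])
  with B AB mat_mult_left_right_inverse[OF A B AB]
  show "inv_mat A \<in> carrier_mat n n" "A * inv_mat A = 1\<^sub>m n" "inv_mat A * A = 1\<^sub>m n" by auto
qed

lemma inv_mat_mult_cancel_left:
  fixes F G G' :: "'a :: field mat"
  assumes F: "F \<in> carrier_mat n n" and G: "G \<in> carrier_mat n n" and G': "G' \<in> carrier_mat n n"
    and dF: "det F \<noteq> 0" and dG: "det G \<noteq> 0"
  shows "inv_mat (F * G) * (F * G') = inv_mat G * G'"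
proof -
  note iF = inv_mat_carrier[OF F dF] and iG = inv_mat_carrier[OF G dG]
  note assoc = assoc_mult_mat[of _ n n _ n _ n]
  have "(F * G) * (inv_mat G * inv_mat F) = F * (G * inv_mat G) * inv_mat F"
    using F G iF iG by (simp add: assoc)
  then have "inv_mat (F * G) = inv_mat G * inv_mat F"
    using F G iF iG mult_inv_mat[OF F dF] mult_inv_mat[OF G dG] by (intro inv_mat_eqI[of _ n]) auto
  then have "inv_mat (F * G) * (F * G') = inv_mat G * (inv_mat F * F) * G'"
    using F G G' iF iG by (simp add: assoc)
  then show ?thesis using inv_mat_mult[OF F dF] iG by simp
qed

lemma det_mult_shift:
  fixes A :: "'a :: comm_ring_1 mat"
  assumes A: "A \<in> carrier_mat n n" and M: "M \<in> carrier_mat n n"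
  shows "det A * det (M - z \<cdot>\<^sub>m 1\<^sub>m n) = det (A * M - z \<cdot>\<^sub>m A)"
proof -
  have "A * (M - z \<cdot>\<^sub>m 1\<^sub>m n) = A * M - A * (z \<cdot>\<^sub>m 1\<^sub>m n)"
    by (rule mult_minus_distrib_mat[OF A M]) auto
  also have "A * (z \<cdot>\<^sub>m 1\<^sub>m n) = z \<cdot>\<^sub>m A"
    using mult_smult_distrib[OF A, of "1\<^sub>m n" n z] A by simp
  finally show ?thesis using det_mult[OF A, of "M - z \<cdot>\<^sub>m 1\<^sub>m n"] M by (simp add: minus_carrier_mat)
qed

lemma det_of_real_shift_inv_mat:
  fixes A L :: "real mat"
  assumes A: "A \<in> carrier_mat n n" and L: "L \<in> carrier_mat n n" and dA: "det A \<noteq> 0"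
  shows "det (map_mat complex_of_real (inv_mat A * L) - z \<cdot>\<^sub>m 1\<^sub>m n)
    = det (map_mat complex_of_real L - z \<cdot>\<^sub>m map_mat complex_of_real A) / complex_of_real (det A)"
proof -
  have M: "inv_mat A * L \<in> carrier_mat n n" using inv_mat_carrier[OF A dA] L by simp
  have "A * (inv_mat A * L) = L"
    using assoc_mult_mat[OF A inv_mat_carrier[OF A dA] L] mult_inv_mat[OF A dA] L by simp
  then show ?thesis
    using det_mult_shift[of "map_mat complex_of_real A" n "map_mat complex_of_real (inv_mat A * L)" z] A M dA
    by (simp add: of_real_hom.mat_hom_mult[OF A M, symmetric] field_simps)
qed

lemma poly_char_poly_eq_det:
  fixes M :: "'a :: field mat"
  assumes M: "M \<in> carrier_mat n n"
  shows "poly (char_poly M) z = (-1) ^ n * det (M - z \<cdot>\<^sub>m 1\<^sub>m n)"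
proof -
  have "- char_matrix M z = (-1) \<cdot>\<^sub>m (M - z \<cdot>\<^sub>m 1\<^sub>m n)"
    unfolding char_matrix_def using M by (intro eq_matI) auto
  then show ?thesis using char_poly_matrix[OF M] M by simp
qed

lemma char_poly_eq_if_det_shift_eq:
  fixes M N :: "'a :: {field, ring_char_0} mat"
  assumes M: "M \<in> carrier_mat (k + n) (k + n)" and N: "N \<in> carrier_mat n n"
    and det: "\<And>z. det (M - z \<cdot>\<^sub>m 1\<^sub>m (k + n)) = (1 - z) ^ k * det (N - z \<cdot>\<^sub>m 1\<^sub>m n)"
  shows "char_poly M = [:-1, 1:] ^ k * char_poly N"
proof -
  have "poly (char_poly M) = poly ([:-1, 1:] ^ k * char_poly N)"
  proof
    fix z :: 'a
    have "(-1) ^ (k + n) * (1 - z) ^ k = ((-1) ^ k * (1 - z) ^ k) * (-1) ^ n"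
      by (simp add: power_add ac_simps)
    also have "(-1) ^ k * (1 - z) ^ k = (z - 1) ^ k"
      by (simp add: power_mult_distrib[symmetric])
    finally have "(-1) ^ (k + n) * (1 - z) ^ k = (z - 1) ^ k * (-1) ^ n" .
    then show "poly (char_poly M) z = poly ([:-1, 1:] ^ k * char_poly N) z"
      by (simp add: poly_char_poly_eq_det[OF M] poly_char_poly_eq_det[OF N] det)
  qed
  then show ?thesis unfolding poly_eq_poly_eq_iff .
qed

lemma kkt_factor_mult:
  fixes A :: "'a :: comm_ring_1 mat"
  assumes "A \<in> carrier_mat m m" "C \<in> carrier_mat n m" "D \<in> carrier_mat n m"
    "R \<in> carrier_mat m m" "S \<in> carrier_mat m n" "H \<in> carrier_mat n n"
    "L \<in> carrier_mat m n" "T \<in> carrier_mat m m"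
  shows "block3 A (0\<^sub>m m n) (1\<^sub>m m) C (1\<^sub>m n) D (1\<^sub>m m) (0\<^sub>m m n) (0\<^sub>m m m)
       * block3 R S (0\<^sub>m m m) (0\<^sub>m n m) H (0\<^sub>m n m) (0\<^sub>m m m) L T
    = block3 (A * R) (A * S + L) T (C * R) (C * S + H + D * L) (D * T) R S (0\<^sub>m m m)"
  using assms
  by (subst block3_mult[where ?r1.0=m and ?r2.0=n and ?r3.0=m and ?s1.0=m and ?s2.0=n and ?s3.0=m
        and ?t1.0=m and ?t2.0=n and ?t3.0=m]) auto

lemma det_kkt_left_factor_nonzero:
  fixes A :: "'a :: idom mat"
  assumes "A \<in> carrier_mat m m" "C \<in> carrier_mat n m" "D \<in> carrier_mat n m"
  shows "det (block3 A (0\<^sub>m m n) (1\<^sub>m m) C (1\<^sub>m n) D (1\<^sub>m m) (0\<^sub>m m n) (0\<^sub>m m m)) \<noteq> 0"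
proof -
  let ?F = "block3 A (0\<^sub>m m n) (1\<^sub>m m) C (1\<^sub>m n) D (1\<^sub>m m) (0\<^sub>m m n) (0\<^sub>m m m)"
  let ?G = "block3 (0\<^sub>m m m) (0\<^sub>m m n) (1\<^sub>m m) (- D) (1\<^sub>m n) (D * A - C) (1\<^sub>m m) (0\<^sub>m m n) (- A)"
  have cancel: "- 0\<^sub>m m m = (0\<^sub>m m m :: 'a mat)" "A + - A = 0\<^sub>m m m"
    "C + (D * A - C) + - (D * A) = 0\<^sub>m n m"
    using assms by (auto intro!: eq_matI)
  have "?F * ?G = 1\<^sub>m (m + n + m)"
    using assms
    by (subst block3_mult[where ?r1.0=m and ?r2.0=n and ?r3.0=m and ?s1.0=m and ?s2.0=n and ?s3.0=m
          and ?t1.0=m and ?t2.0=n and ?t3.0=m]) (auto simp: cancel block3_one[symmetric])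
  moreover have "?F \<in> carrier_mat (m + n + m) (m + n + m)" "?G \<in> carrier_mat (m + n + m) (m + n + m)"
    using assms by (auto intro!: block3_carrier simp: minus_carrier_mat)
  ultimately have "det ?F * det ?G = 1"
    using det_mult by (metis det_one)
  then show ?thesis by auto
qed

lemma kkt_reduced_blocks_carrier:
  assumes X: "X \<in> carrier_mat m m" and Rz: "Rz \<in> carrier_mat m n" and Luu: "Luu \<in> carrier_mat m m"
  shows "Luz - Luu * X * Rz \<in> carrier_mat m n"
    and "Lzz - Luz\<^sup>T * X * Rz - Rz\<^sup>T * X\<^sup>T * Luz + Rz\<^sup>T * X\<^sup>T * Luu * X * Rz \<in> carrier_mat n n"
proof -
  have D: "Rz\<^sup>T * X\<^sup>T \<in> carrier_mat n m" using Rz X by simp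
  show "Luz - Luu * X * Rz \<in> carrier_mat m n"
    by (rule minus_carrier_mat[OF mult_carrier_mat[OF mult_carrier_mat[OF Luu X] Rz]])
  show "Lzz - Luz\<^sup>T * X * Rz - Rz\<^sup>T * X\<^sup>T * Luz + Rz\<^sup>T * X\<^sup>T * Luu * X * Rz \<in> carrier_mat n n"
    by (rule add_carrier_mat[OF mult_carrier_mat[OF mult_carrier_mat[OF mult_carrier_mat[OF D Luu] X] Rz]])
qed

lemma kkt_factorization:
  fixes Ru :: "'a :: field mat"
  assumes Ru: "Ru \<in> carrier_mat m m" and X: "X \<in> carrier_mat m m" and XRu: "X * Ru = 1\<^sub>m m"
    and Rz: "Rz \<in> carrier_mat m n" and Luu: "Luu \<in> carrier_mat m m"
    and Luz: "Luz \<in> carrier_mat m n" and Lzz: "Lzz \<in> carrier_mat n n"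
  shows "block3 Luu Luz Ru\<^sup>T Luz\<^sup>T Lzz Rz\<^sup>T Ru Rz (0\<^sub>m m m)
    = block3 (Luu * X) (0\<^sub>m m n) (1\<^sub>m m) (Luz\<^sup>T * X) (1\<^sub>m n) (Rz\<^sup>T * X\<^sup>T) (1\<^sub>m m) (0\<^sub>m m n) (0\<^sub>m m m)
      * block3 Ru Rz (0\<^sub>m m m) (0\<^sub>m n m)
          (Lzz - Luz\<^sup>T * X * Rz - Rz\<^sup>T * X\<^sup>T * Luz + Rz\<^sup>T * X\<^sup>T * Luu * X * Rz)
          (0\<^sub>m n m) (0\<^sub>m m m) (Luz - Luu * X * Rz) Ru\<^sup>T"
proof -
  define D where "D = Rz\<^sup>T * X\<^sup>T"
  have D: "D \<in> carrier_mat n m" using Rz X by (simp add: D_def)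
  have "Ru * X = 1\<^sub>m m" by (rule mat_mult_left_right_inverse[OF X Ru XRu])
  then have "X\<^sup>T * Ru\<^sup>T = 1\<^sub>m m" using transpose_mult[OF Ru X] by simp
  then have b13: "D * Ru\<^sup>T = Rz\<^sup>T"
    unfolding D_def using Rz X Ru by (simp add: assoc_mult_mat[of _ n m _ m _ m])
  have b11: "Luu * X * Ru = Luu" and b21: "Luz\<^sup>T * X * Ru = Luz\<^sup>T"
    using Luu Luz X Ru XRu by (simp_all add: assoc_mult_mat[of _ _ m _ m _ m])
  have b12: "Luu * X * Rz + (Luz - Luu * X * Rz) = Luz"
    using Luu X Rz Luz by (intro eq_matI) auto
  have "D * (Luz - Luu * X * Rz) = D * Luz - D * Luu * X * Rz"
    using D Luu X Rz Luz
    by (simp add: mult_minus_distrib_mat[of _ n m _ n] assoc_mult_mat[of _ n m _ m _ n]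
        assoc_mult_mat[of _ n m _ m _ m])
  then have b22: "Luz\<^sup>T * X * Rz + (Lzz - Luz\<^sup>T * X * Rz - D * Luz + D * Luu * X * Rz)
      + D * (Luz - Luu * X * Rz) = Lzz"
    using D Luu X Rz Luz Lzz by (intro eq_matI) auto
  note L = kkt_reduced_blocks_carrier(1)[OF X Rz Luu]
  note H = kkt_reduced_blocks_carrier(2)[OF X Rz Luu, of Lzz Luz, folded D_def]
  have LuzT: "Luz\<^sup>T \<in> carrier_mat n m" and RuT: "Ru\<^sup>T \<in> carrier_mat m m"
    using Luz Ru by simp_all
  show ?thesis
    unfolding D_def[symmetric]
    kkt_factor_mult[OF mult_carrier_mat[OF Luu X] mult_carrier_mat[OF LuzT X] D Ru Rz H L RuT]
    b11 b12 b13 b21 b22 ..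
qed

lemma
  fixes Ru :: "'a :: field mat"
  assumes Ru: "Ru \<in> carrier_mat m m" and X: "X \<in> carrier_mat m m" and XRu: "X * Ru = 1\<^sub>m m"
    and Rz: "Rz \<in> carrier_mat m n" and Luu: "Luu \<in> carrier_mat m m"
    and Luz: "Luz \<in> carrier_mat m n" and Lzz: "Lzz \<in> carrier_mat n n"
    and B: "B \<in> carrier_mat n n" and dB: "det B \<noteq> 0"
    and Lyy_def: "Lyy = Luz - Luu * X * Rz"
    and H_def: "H = Lzz - Luz\<^sup>T * X * Rz - Rz\<^sup>T * X\<^sup>T * Luz + Rz\<^sup>T * X\<^sup>T * Luu * X * Rz"
    and K_def: "K = block3 Luu Luz Ru\<^sup>T Luz\<^sup>T Lzz Rz\<^sup>T Ru Rz (0\<^sub>m m m)"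
    and K1_def: "K1 = block3 (Luu * X) (0\<^sub>m m n) (1\<^sub>m m) (Luz\<^sup>T * X) (1\<^sub>m n) (Rz\<^sup>T * X\<^sup>T)
      (1\<^sub>m m) (0\<^sub>m m n) (0\<^sub>m m m)"
    and K2_def: "K2 = block3 Ru Rz (0\<^sub>m m m) (0\<^sub>m n m) B (0\<^sub>m n m) (0\<^sub>m m m) Lyy Ru\<^sup>T"
    and K2H_def: "K2H = block3 Ru Rz (0\<^sub>m m m) (0\<^sub>m n m) H (0\<^sub>m n m) (0\<^sub>m m m) Lyy Ru\<^sup>T"
  shows inv_kkt_preconditioner_mult: "inv_mat (K1 * K2) * K = inv_mat K2 * K2H"
    and inv_kkt_preconditioner_mult_carrier: "inv_mat K2 * K2H \<in> carrier_mat (m + n + m) (m + n + m)"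
proof -
  have Lyy: "Lyy \<in> carrier_mat m n" and H: "H \<in> carrier_mat n n"
    unfolding Lyy_def H_def by (rule kkt_reduced_blocks_carrier[OF X Rz Luu])+
  have RuT: "Ru\<^sup>T \<in> carrier_mat m m" using Ru by simp
  have "det X * det Ru = 1" using det_mult[OF X Ru] XRu by simp
  then have dK2: "det K2 \<noteq> 0"
    unfolding K2_def using det_block3_triangular[OF Ru Rz B Lyy RuT] dB
    by (auto simp: det_transpose[OF Ru])
  have dK1: "det K1 \<noteq> 0"
    unfolding K1_def by (rule det_kkt_left_factor_nonzero) (use X Rz Luu Luz in auto)
  have K1: "K1 \<in> carrier_mat (m + n + m) (m + n + m)" and K2: "K2 \<in> carrier_mat (m + n + m) (m + n + m)"
    and K2H: "K2H \<in> carrier_mat (m + n + m) (m + n + m)"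
    unfolding K1_def K2_def K2H_def using X Ru Rz Luu Luz B H Lyy by (auto intro!: block3_carrier)
  show "inv_mat (K1 * K2) * K = inv_mat K2 * K2H"
    unfolding K_def kkt_factorization[OF Ru X XRu Rz Luu Luz Lzz] K1_def[symmetric] H_def[symmetric]
      Lyy_def[symmetric] K2H_def[symmetric]
    by (rule inv_mat_mult_cancel_left[OF K1 K2 K2H dK1 dK2])
  show "inv_mat K2 * K2H \<in> carrier_mat (m + n + m) (m + n + m)"
    using inv_mat_carrier[OF K2 dK2] K2H by simp
qed

lemma det_kkt_pencil:
  fixes R :: "'a :: idom mat"
  assumes R: "R \<in> carrier_mat m m" and S: "S \<in> carrier_mat m n" and H: "H \<in> carrier_mat n n"
    and B: "B \<in> carrier_mat n n" and L: "L \<in> carrier_mat m n" and T: "T \<in> carrier_mat m m"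
  shows "det (block3 R S (0\<^sub>m m m) (0\<^sub>m n m) H (0\<^sub>m n m) (0\<^sub>m m m) L T
      - z \<cdot>\<^sub>m block3 R S (0\<^sub>m m m) (0\<^sub>m n m) B (0\<^sub>m n m) (0\<^sub>m m m) L T)
    = (1 - z) ^ (2 * m) * det R * det T * det (H - z \<cdot>\<^sub>m B)"
proof -
  have diff_self: "M - z \<cdot>\<^sub>m M = (1 - z) \<cdot>\<^sub>m M" for M :: "'a mat"
    by (intro eq_matI) (auto simp: algebra_simps)
  have zero_diff: "0\<^sub>m r c - 0\<^sub>m r c = (0\<^sub>m r c :: 'a mat)" for r c
    by (intro eq_matI) auto
  have "det (block3 R S (0\<^sub>m m m) (0\<^sub>m n m) H (0\<^sub>m n m) (0\<^sub>m m m) L T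
      - z \<cdot>\<^sub>m block3 R S (0\<^sub>m m m) (0\<^sub>m n m) B (0\<^sub>m n m) (0\<^sub>m m m) L T)
    = det ((1 - z) \<cdot>\<^sub>m R) * det (H - z \<cdot>\<^sub>m B) * det ((1 - z) \<cdot>\<^sub>m T)"
    using assms
    by (simp add: block3_diff_smult[where ?r1.0=m and ?r2.0=n and ?r3.0=m and ?s1.0=m and ?s2.0=n
          and ?s3.0=m] diff_self[symmetric] zero_diff det_block3_triangular minus_carrier_mat)
  moreover have "(1 - z) ^ (2 * m) = (1 - z) ^ m * (1 - z) ^ m"
    by (simp add: mult_2 power_add)
  ultimately show ?thesis
    using R T by (simp add: det_smult)
qed

lemma det_shift_inv_kkt_pencil:
  fixes R :: "real mat"
  assumes R: "R \<in> carrier_mat m m" and S: "S \<in> carrier_mat m n" and H: "H \<in> carrier_mat n n"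
    and B: "B \<in> carrier_mat n n" and L: "L \<in> carrier_mat m n" and T: "T \<in> carrier_mat m m"
    and dR: "det R \<noteq> 0" and dB: "det B \<noteq> 0" and dT: "det T \<noteq> 0"
  shows "det (map_mat complex_of_real (inv_mat (block3 R S (0\<^sub>m m m) (0\<^sub>m n m) B (0\<^sub>m n m) (0\<^sub>m m m) L T)
        * block3 R S (0\<^sub>m m m) (0\<^sub>m n m) H (0\<^sub>m n m) (0\<^sub>m m m) L T) - z \<cdot>\<^sub>m 1\<^sub>m (m + n + m))
    = (1 - z) ^ (2 * m) * det (map_mat complex_of_real (inv_mat B * H) - z \<cdot>\<^sub>m 1\<^sub>m n)"
proof -
  let ?c = "map_mat complex_of_real"
  let ?K = "block3 R S (0\<^sub>m m m) (0\<^sub>m n m) B (0\<^sub>m n m) (0\<^sub>m m m) L T"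
  let ?KH = "block3 R S (0\<^sub>m m m) (0\<^sub>m n m) H (0\<^sub>m n m) (0\<^sub>m m m) L T"
  have K: "?K \<in> carrier_mat (m + n + m) (m + n + m)" and KH: "?KH \<in> carrier_mat (m + n + m) (m + n + m)"
    using assms by (auto intro!: block3_carrier)
  have dK: "det ?K = det R * det B * det T" by (rule det_block3_triangular[OF R S B L T])
  have map_zero: "?c (0\<^sub>m r c) = 0\<^sub>m r c" for r c
    by (intro eq_matI) auto
  have pencil: "det (?c ?KH - z \<cdot>\<^sub>m ?c ?K)
      = (1 - z) ^ (2 * m) * complex_of_real (det R * det T) * det (?c H - z \<cdot>\<^sub>m ?c B)"
    using assms by (simp add: map_block3[of _ m m _ n _ m _ n _ _ _ m] map_zero det_kkt_pencil[where m=m and n=n])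
  have "det (?c (inv_mat ?K * ?KH) - z \<cdot>\<^sub>m 1\<^sub>m (m + n + m))
      = det (?c ?KH - z \<cdot>\<^sub>m ?c ?K) / complex_of_real (det ?K)"
    by (rule det_of_real_shift_inv_mat[OF K KH]) (simp add: dK dR dB dT)
  also have "\<dots> = (1 - z) ^ (2 * m) * complex_of_real (det R * det T) * det (?c H - z \<cdot>\<^sub>m ?c B)
      / complex_of_real (det R * det B * det T)"
    unfolding pencil dK ..
  also have "\<dots> = (1 - z) ^ (2 * m) * (det (?c H - z \<cdot>\<^sub>m ?c B) / complex_of_real (det B))"
    using dR dT by (simp add: field_simps)
  finally show ?thesis
    unfolding det_of_real_shift_inv_mat[OF B H dB] .
qed

theorem mainTheorem6:
  fixes m n :: nat
    and Ru Rz Luu Luz Lzz B :: "real mat"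
    and Lzu Lyy H K K1 K2 P4 :: "real mat"
  assumes "m \<ge> 1" and "n \<ge> 1"
    and Ru: "Ru \<in> carrier_mat m m" and "invertible_mat Ru"
    and Rz: "Rz \<in> carrier_mat m n"
    and Luu: "Luu \<in> carrier_mat m m" and "Luu\<^sup>T = Luu"
    and Luz: "Luz \<in> carrier_mat m n"
    and Lzz: "Lzz \<in> carrier_mat n n" and "Lzz\<^sup>T = Lzz"
    and B: "B \<in> carrier_mat n n" and "invertible_mat B"
    and "Lzu = Luz\<^sup>T"
    and "Lyy = Luz - Luu * inv_mat Ru * Rz"
    and "H = Lzz - Lzu * inv_mat Ru * Rz - Rz\<^sup>T * (inv_mat Ru)\<^sup>T * Luz
              + Rz\<^sup>T * (inv_mat Ru)\<^sup>T * Luu * inv_mat Ru * Rz"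
    and "K = block3 Luu Luz Ru\<^sup>T  Lzu Lzz Rz\<^sup>T  Ru Rz (0\<^sub>m m m)"
    and "K1 = block3 (Luu * inv_mat Ru) (0\<^sub>m m n) (1\<^sub>m m)
                     (Lzu * inv_mat Ru) (1\<^sub>m n) (Rz\<^sup>T * (inv_mat Ru)\<^sup>T)
                     (1\<^sub>m m) (0\<^sub>m m n) (0\<^sub>m m m)"
    and "K2 = block3 Ru Rz (0\<^sub>m m m)  (0\<^sub>m n m) B (0\<^sub>m n m)  (0\<^sub>m m m) Lyy Ru\<^sup>T"
    and "P4 = K1 * K2"
  shows "(\<forall>z::complex.
            det (map_mat complex_of_real (inv_mat P4 * K) - z \<cdot>\<^sub>m 1\<^sub>m (2*m+n))
            = (1 - z) ^ (2*m) * det (map_mat complex_of_real (inv_mat B * H) - z \<cdot>\<^sub>m 1\<^sub>m n))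
         \<and> char_poly (map_mat complex_of_real (inv_mat P4 * K))
            = [:-1, 1:] ^ (2*m) * char_poly (map_mat complex_of_real (inv_mat B * H))"
proof -
  let ?c = "map_mat complex_of_real"
  define X where "X = inv_mat Ru"
  have dRu: "det Ru \<noteq> 0" and dB: "det B \<noteq> 0"
    using invertible_mat_det_nonzero Ru B \<open>invertible_mat Ru\<close> \<open>invertible_mat B\<close> by blast+
  have X: "X \<in> carrier_mat m m" and XRu: "X * Ru = 1\<^sub>m m"
    unfolding X_def using inv_mat_carrier inv_mat_mult Ru dRu by blast+
  have Lyy: "Lyy \<in> carrier_mat m n" and H: "H \<in> carrier_mat n n"
    using kkt_reduced_blocks_carrier[OF X Rz Luu] assms(13-15) by (simp_all add: X_def)
  have RuT: "Ru\<^sup>T \<in> carrier_mat m m" and dRuT: "det Ru\<^sup>T \<noteq> 0"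
    using Ru dRu by (simp_all add: det_transpose)
  note preconditioned = inv_kkt_preconditioner_mult inv_kkt_preconditioner_mult_carrier
  have Q: "inv_mat P4 * K = inv_mat K2 * block3 Ru Rz (0\<^sub>m m m) (0\<^sub>m n m) H (0\<^sub>m n m) (0\<^sub>m m m) Lyy Ru\<^sup>T"
    and cQ: "inv_mat P4 * K \<in> carrier_mat (2 * m + n) (2 * m + n)"
    using preconditioned[OF Ru X XRu Rz Luu Luz Lzz B dB, unfolded X_def,
        OF assms(14) assms(15-17)[unfolded assms(13)] assms(18) refl]
    by (simp_all add: assms(19) mult_2 add.commute add.left_commute)
  have shift: "det (?c (inv_mat P4 * K) - z \<cdot>\<^sub>m 1\<^sub>m (2 * m + n))
      = (1 - z) ^ (2 * m) * det (?c (inv_mat B * H) - z \<cdot>\<^sub>m 1\<^sub>m n)" for z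
    using det_shift_inv_kkt_pencil[OF Ru Rz H B Lyy RuT dRu dB dRuT, of z]
    unfolding Q assms(18) by (simp add: mult_2 add.commute add.left_commute)
  moreover have "?c (inv_mat B * H) \<in> carrier_mat n n"
    using inv_mat_carrier[OF B dB] H by simp
  ultimately show ?thesis
    using cQ char_poly_eq_if_det_shift_eq[of "?c (inv_mat P4 * K)" "2 * m" n "?c (inv_mat B * H)"] by auto
qed

end
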